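(* Let \(X\) be a nonempty set, let \(\Phi\) be a mapping with domain \(X^{2}\), and let \(a_0 \in \Phi(X^{2})\). Then \(\Phi\) is \(a_0\)-coherent if and only if the fiber \(R := \Phi^{-1}(a_0)\) is an equivalence relation on \(X\) and the partition \(P_R \otimes P_R^1\) of \(X^{2}\) is a refinement of the partition \(P_{\Phi^{-1}} := \{\Phi^{-1}(b) \colon b \in \Phi(X^{2})\}\) of \(X^2\).
   Context: \(\Phi(X^2)\) is the range of \(\Phi\) and \(\Phi^{-1}(b)=\{\langle x,y\rangle\in X^2:\Phi(x,y)=b\}\). \(\Phi\) is strongly consistent with an equivalence relation \(R\) on \(X\) if \(\langle x_1,x_2\rangle\in R\) and \(\langle x_3,x_4\rangle\in R\) imply \(\Phi(x_1,x_3)=\Phi(x_2,x_4)\); \(\Phi\) is \(a_0\)-coherent if \(\Phi^{-1}(a_0)\) is an equivalence relation on \(X\) and \(\Phi\) is strongly consistent with it. For an equivalence relation \(R\) on \(X\), \(P_R=\{X_j: j\in J\}\) is the partition of \(X\) into the (distinct) equivalence classes of \(R\), and \(P_R\otimes P_R^1\) is the partition of \(X^2\) whose blocks are the set \(\bigcup_{j\in J}X_j^2\) together with all sets \(X_{j_1}\times X_{j_2}\) for distinct \(j_1,j_2\in J\). A partition \(P_1\) of a set is a refinement of a partition \(P_2\) of the same set if every block of \(P_1\) is contained in some block of \(P_2\). *)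

theory Defs
  imports Main
begin

text \<open>A mapping with domain X^2 is modelled as Phi :: 'a * 'a => 'b; only its values on X \<times> X matter.\<close>

definition fiber :: "'a set \<Rightarrow> ('a \<times> 'a \<Rightarrow> 'b) \<Rightarrow> 'b \<Rightarrow> ('a \<times> 'a) set" where
  "fiber X Phi b = {p \<in> X \<times> X. Phi p = b}"

definition strongly_consistent :: "'a set \<Rightarrow> ('a \<times> 'a \<Rightarrow> 'b) \<Rightarrow> ('a \<times> 'a) set \<Rightarrow> bool" where
  "strongly_consistent X Phi R \<longleftrightarrow>
     (\<forall>x1 x2 x3 x4. (x1, x2) \<in> R \<longrightarrow> (x3, x4) \<in> R \<longrightarrow> Phi (x1, x3) = Phi (x2, x4))"

definition coherent :: "'a set \<Rightarrow> ('a \<times> 'a \<Rightarrow> 'b) \<Rightarrow> 'b \<Rightarrow> bool" where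
  "coherent X Phi a0 \<longleftrightarrow> equiv X (fiber X Phi a0) \<and> strongly_consistent X Phi (fiber X Phi a0)"

text \<open>The partition P_R (x) P_R^1 of X^2: the union of all squares of classes, together with
  all products of two distinct classes.\<close>
definition prod_partition :: "'a set \<Rightarrow> ('a \<times> 'a) set \<Rightarrow> ('a \<times> 'a) set set" where
  "prod_partition X R =
     {\<Union>C\<in>X // R. C \<times> C} \<union> {C1 \<times> C2 | C1 C2. C1 \<in> X // R \<and> C2 \<in> X // R \<and> C1 \<noteq> C2}"

definition fiber_partition :: "'a set \<Rightarrow> ('a \<times> 'a \<Rightarrow> 'b) \<Rightarrow> ('a \<times> 'a) set set" where
  "fiber_partition X Phi = {fiber X Phi b | b. b \<in> Phi ` (X \<times> X)}"

definition refines :: "'c set set \<Rightarrow> 'c set set \<Rightarrow> bool" where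
  "refines P1 P2 \<longleftrightarrow> (\<forall>B\<in>P1. \<exists>C\<in>P2. B \<subseteq> C)"

end

theory Submission
  imports Defs
begin

text \<open>For an equivalence R on X, strong consistency of Phi with R says exactly that Phi is
  constant on every product C1 \<times> C2 of two R-classes. The squares C \<times> C lie in R itself, so
  when R is the fiber of a0 they are covered by the block fiber X Phi a0 automatically, and what
  remains is the refinement condition for the products of distinct classes.\<close>

lemma equiv_Union_class_squares:
  assumes "equiv X R"
  shows "(\<Union>C\<in>X//R. C \<times> C) = R"
proof
  show "(\<Union>C\<in>X//R. C \<times> C) \<subseteq> R"
    using in_quotient_imp_in_rel [OF assms] by blast
  show "R \<subseteq> (\<Union>C\<in>X//R. C \<times> C)"
  proof
    fix p assume "p \<in> R"
    then obtain x y where p: "p = (x, y)" "(x, y) \<in> R" by (cases p) auto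
    then have "x \<in> X" using equiv_type [OF assms] by auto
    have "R``{x} \<in> X//R" using \<open>x \<in> X\<close> by (rule quotientI)
    moreover have "x \<in> R``{x}" using assms \<open>x \<in> X\<close> by (rule equiv_class_self)
    then have "p \<in> R``{x} \<times> R``{x}" using p by simp
    ultimately show "p \<in> (\<Union>C\<in>X//R. C \<times> C)" by (rule UN_I)
  qed
qed

lemma strongly_consistent_iff_class_products:
  assumes "equiv X R"
  shows "strongly_consistent X Phi R \<longleftrightarrow>
           (\<forall>C1\<in>X//R. \<forall>C2\<in>X//R. \<exists>F\<in>fiber_partition X Phi. C1 \<times> C2 \<subseteq> F)"
proof
  assume sc: "strongly_consistent X Phi R"
  show "\<forall>C1\<in>X//R. \<forall>C2\<in>X//R. \<exists>F\<in>fiber_partition X Phi. C1 \<times> C2 \<subseteq> F"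
  proof (intro ballI)
    fix C1 C2 assume "C1 \<in> X//R" "C2 \<in> X//R"
    then obtain x1 x2 where x: "x1 \<in> X" "x2 \<in> X" "C1 = R``{x1}" "C2 = R``{x2}"
      by (auto elim!: quotientE)
    have "C1 \<times> C2 \<subseteq> fiber X Phi (Phi (x1, x2))"
      using sc equiv_type [OF assms] x
      by (auto simp: strongly_consistent_def fiber_def)
    moreover have "fiber X Phi (Phi (x1, x2)) \<in> fiber_partition X Phi"
      using x by (auto simp: fiber_partition_def)
    ultimately show "\<exists>F\<in>fiber_partition X Phi. C1 \<times> C2 \<subseteq> F" by blast
  qed
next
  assume products: "\<forall>C1\<in>X//R. \<forall>C2\<in>X//R. \<exists>F\<in>fiber_partition X Phi. C1 \<times> C2 \<subseteq> F"
  show "strongly_consistent X Phi R"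
    unfolding strongly_consistent_def
  proof (intro allI impI)
    fix x1 x2 x3 x4 assume R12: "(x1, x2) \<in> R" and R34: "(x3, x4) \<in> R"
    then have "x1 \<in> X" "x3 \<in> X" using equiv_type [OF assms] by auto
    then obtain F where F: "F \<in> fiber_partition X Phi" "R``{x1} \<times> R``{x3} \<subseteq> F"
      using products by (meson quotientI)
    then obtain b where "F = fiber X Phi b" by (auto simp: fiber_partition_def)
    moreover have "x1 \<in> R``{x1}" "x3 \<in> R``{x3}"
      using \<open>x1 \<in> X\<close> \<open>x3 \<in> X\<close> equiv_class_self [OF assms] by auto
    then have "(x1, x3) \<in> F" "(x2, x4) \<in> F"
      using F(2) R12 R34 by auto
    ultimately show "Phi (x1, x3) = Phi (x2, x4)" by (simp add: fiber_def)
  qed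
qed

lemma refines_prod_partition_iff:
  assumes "equiv X R" and "F0 \<in> P" and "R \<subseteq> F0"
  shows "refines (prod_partition X R) P \<longleftrightarrow>
           (\<forall>C1\<in>X//R. \<forall>C2\<in>X//R. \<exists>F\<in>P. C1 \<times> C2 \<subseteq> F)"
proof
  assume refines: "refines (prod_partition X R) P"
  show "\<forall>C1\<in>X//R. \<forall>C2\<in>X//R. \<exists>F\<in>P. C1 \<times> C2 \<subseteq> F"
  proof (intro ballI)
    fix C1 C2 assume C: "C1 \<in> X//R" "C2 \<in> X//R"
    have "\<exists>B\<in>prod_partition X R. C1 \<times> C2 \<subseteq> B"
    proof (cases "C1 = C2")
      case True
      with C have "C1 \<times> C2 \<subseteq> (\<Union>C\<in>X//R. C \<times> C)" by blast
      moreover have "(\<Union>C\<in>X//R. C \<times> C) \<in> prod_partition X R"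
        by (simp add: prod_partition_def)
      ultimately show ?thesis by blast
    next
      case False
      with C have "C1 \<times> C2 \<in> prod_partition X R"
        unfolding prod_partition_def by blast
      then show ?thesis by blast
    qed
    with refines show "\<exists>F\<in>P. C1 \<times> C2 \<subseteq> F"
      unfolding refines_def by (meson order_trans)
  qed
next
  assume products: "\<forall>C1\<in>X//R. \<forall>C2\<in>X//R. \<exists>F\<in>P. C1 \<times> C2 \<subseteq> F"
  show "refines (prod_partition X R) P"
    unfolding refines_def
  proof
    fix B assume "B \<in> prod_partition X R"
    then consider "B = (\<Union>C\<in>X//R. C \<times> C)"
      | C1 C2 where "B = C1 \<times> C2" "C1 \<in> X//R" "C2 \<in> X//R"
      unfolding prod_partition_def by blast
    then show "\<exists>F\<in>P. B \<subseteq> F"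
    proof cases
      case 1
      then show ?thesis
        using assms equiv_Union_class_squares [OF assms(1)] by blast
    next
      case 2
      then show ?thesis using products by blast
    qed
  qed
qed

theorem theorem2p10:
  fixes X :: "'a set" and Phi :: "'a \<times> 'a \<Rightarrow> 'b" and a0 :: 'b
  assumes "X \<noteq> {}"
    and "a0 \<in> Phi ` (X \<times> X)"
  shows "coherent X Phi a0 \<longleftrightarrow>
           (equiv X (fiber X Phi a0) \<and>
            refines (prod_partition X (fiber X Phi a0)) (fiber_partition X Phi))"
proof -
  have fiber_a0: "fiber X Phi a0 \<in> fiber_partition X Phi"
    using assms(2) by (auto simp: fiber_partition_def)
  have "strongly_consistent X Phi (fiber X Phi a0) \<longleftrightarrow>
          refines (prod_partition X (fiber X Phi a0)) (fiber_partition X Phi)"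
    if "equiv X (fiber X Phi a0)"
    using strongly_consistent_iff_class_products [OF that]
      refines_prod_partition_iff [OF that fiber_a0 subset_refl]
    by simp
  then show ?thesis
    unfolding coherent_def by blast
qed

end
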